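(* Let $m\ge1$, $d=2m$, and work in $\mathcal{H}^{\mathrm B}$. Then: (a) $u_j^+$ commutes with $T_i$ for all $i\in\{0,1,\dots,d-1\}\setminus\{j\}$. (b) For $i\ge1$, $u_i^+T_{i\to0}=u_{i+1}^+T_{1\to i}^{-1}-q^iu_i^+T_{1\to i}^{-1}$. (c) Let $x\in\Sigma_{2m}$ and $i\ge1$. Then $u_i^+T_xT_0\in u_i^+\mathcal{H}+\sum_{j>i}\mathcal{H}u_j^+\mathcal{H}$. In particular, $u_i^+T_{i\to0}\in u_i^+(-q^iT_{1\to i}^{-1})+\sum_{j>i}\mathcal{H}u_j^+\mathcal{H}$.
   Context: $K$ is a commutative ring and $q\in K^\times$. $\mathcal{H}^{\mathrm B}=\mathcal{H}_{(1,q)}(W(\mathrm B_{2m}))$ is the associative $K$-algebra generated by $T_0,T_1,\dots,T_{2m-1}$ subject to the type $\mathrm B_{2m}$ braid relations ($T_0T_1T_0T_1=T_1T_0T_1T_0$, $T_0T_i=T_iT_0$ for $i\ge2$, $T_iT_{i+1}T_i=T_{i+1}T_iT_{i+1}$ and $T_iT_j=T_jT_i$ for $i,j\ge1$, $|i-j|\ge2$) and quadratic relations $T_0^2=1$, $T_i^2=(q-1)T_i+q$ for $i\ge1$. $\mathcal{H}=\mathcal{H}_q(\Sigma_{2m})$ is the subalgebra generated by $T_1,\dots,T_{2m-1}$, and $T_x=T_{i_1}\cdots T_{i_r}$ for a reduced expression $x=s_{i_1}\cdots s_{i_r}$. For $a,b\ge0$: $T_{a\to b}=T_aT_{a-1}\cdots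 T_b$ if $a>b$, $T_a$ if $a=b$, $T_aT_{a+1}\cdots T_b$ if $a<b$; $T_{a\to b\to a}=T_aT_{a-1}\cdots T_{b+1}T_bT_{b+1}\cdots T_a$ if $a>b$, $T_a$ if $a=b$, and $T_a\cdots T_{b-1}T_bT_{b-1}\cdots T_a$ if $a<b$. The Jucys–Murphy type elements are $u_k^{\pm}=\prod_{i=0}^{k-1}(q^i\pm T_{i\to0\to i})$ (the factors commute pairwise), with $u_0^\pm=1$. *)

theory Defs
  imports Main
begin

(* A K-algebra A (ring 'a) with structure map sc : K \<Rightarrow> A (unital ring hom into the centre),
   containing elements T 0, ..., T (d-1) satisfying the defining relations of
   H_(1,q)(W(B_d)).  Identities and span-memberships holding in every such algebra are exactly
   those holding in the universal one H^B (which is itself such an algebra). *)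
definition is_HB :: "('k::comm_ring_1 \<Rightarrow> 'a::ring_1) \<Rightarrow> 'k \<Rightarrow> nat \<Rightarrow> (nat \<Rightarrow> 'a) \<Rightarrow> bool" where
  "is_HB sc q d T \<longleftrightarrow>
     sc 1 = 1 \<and> (\<forall>a b. sc (a + b) = sc a + sc b) \<and> (\<forall>a b. sc (a * b) = sc a * sc b)
   \<and> (\<forall>a x. sc a * x = x * sc a)
   \<and> q dvd 1
   \<and> (1 < d \<longrightarrow> T 0 * T 1 * T 0 * T 1 = T 1 * T 0 * T 1 * T 0)
   \<and> (\<forall>i. 2 \<le> i \<and> i < d \<longrightarrow> T 0 * T i = T i * T 0)
   \<and> (\<forall>i. 1 \<le> i \<and> i + 1 < d \<longrightarrow> T i * T (i+1) * T i = T (i+1) * T i * T (i+1))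
   \<and> (\<forall>i j. 1 \<le> i \<and> 1 \<le> j \<and> i < d \<and> j < d \<and> (i + 2 \<le> j \<or> j + 2 \<le> i) \<longrightarrow> T i * T j = T j * T i)
   \<and> T 0 * T 0 = 1
   \<and> (\<forall>i. 1 \<le> i \<and> i < d \<longrightarrow> T i * T i = (sc q - 1) * T i + sc q)"

definition Tarr :: "(nat \<Rightarrow> 'a::ring_1) \<Rightarrow> nat \<Rightarrow> nat \<Rightarrow> 'a" where
  "Tarr T a b = (if b \<le> a then prod_list (map T (rev [b..<Suc a])) else prod_list (map T [a..<Suc b]))"

definition Tarr2 :: "(nat \<Rightarrow> 'a::ring_1) \<Rightarrow> nat \<Rightarrow> nat \<Rightarrow> 'a" where
  "Tarr2 T a b = (if a = b then T a
                  else if b < a then Tarr T a (b+1) * T b * Tarr T (b+1) a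
                  else Tarr T a (b-1) * T b * Tarr T (b-1) a)"

definition uplus :: "('k \<Rightarrow> 'a::ring_1) \<Rightarrow> 'k \<Rightarrow> (nat \<Rightarrow> 'a) \<Rightarrow> nat \<Rightarrow> 'a" where
  "uplus sc q T k = prod_list (map (\<lambda>i. sc q ^ i + Tarr2 T i 0) [0..<k])"

definition rinv :: "'a::ring_1 \<Rightarrow> 'a" where
  "rinv x = (THE y. x * y = 1 \<and> y * x = 1)"

inductive_set Hset :: "('k \<Rightarrow> 'a::ring_1) \<Rightarrow> (nat \<Rightarrow> 'a) \<Rightarrow> nat \<Rightarrow> 'a set"
  for sc T d where
  scal: "sc a \<in> Hset sc T d"
| gen: "1 \<le> i \<Longrightarrow> i < d \<Longrightarrow> T i \<in> Hset sc T d"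
| add: "x \<in> Hset sc T d \<Longrightarrow> y \<in> Hset sc T d \<Longrightarrow> x + y \<in> Hset sc T d"
| mult: "x \<in> Hset sc T d \<Longrightarrow> y \<in> Hset sc T d \<Longrightarrow> x * y \<in> Hset sc T d"

inductive_set twosided :: "'a::ring_1 set \<Rightarrow> 'a \<Rightarrow> 'a set" for H u where
  zero: "0 \<in> twosided H u"
| prod: "h \<in> H \<Longrightarrow> h' \<in> H \<Longrightarrow> h * u * h' \<in> twosided H u"
| add: "x \<in> twosided H u \<Longrightarrow> y \<in> twosided H u \<Longrightarrow> x + y \<in> twosided H u"

definition perm_of_word :: "nat list \<Rightarrow> nat \<Rightarrow> nat" where
  "perm_of_word w = foldr (\<lambda>i p. (id(i := i + 1, i + 1 := i)) \<circ> p) w id"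

(* Coxeter length of a permutation of {1..d}: number of inversions *)
definition ninv :: "nat \<Rightarrow> (nat \<Rightarrow> nat) \<Rightarrow> nat" where
  "ninv d p = card {(a, b). 1 \<le> a \<and> a < b \<and> b \<le> d \<and> p b < p a}"

definition reduced_word :: "nat \<Rightarrow> nat list \<Rightarrow> bool" where
  "reduced_word d w \<longleftrightarrow> set w \<subseteq> {1..<d} \<and> length w = ninv d (perm_of_word w)"

definition Tword :: "(nat \<Rightarrow> 'a::ring_1) \<Rightarrow> nat list \<Rightarrow> 'a" where
  "Tword T w = prod_list (map T w)"

end

theory Submission
  imports Defs
begin

(* Write L_k = T_{k->0->k}, so that u_k^+ is the product of the factors q^k + L_k.
   (a) T_0 commutes with every L_k, and T_i (i >= 1) commutes with L_k for k not in {i-1, i}.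
   Since L_i = T_i L_{i-1} T_i commutes with L_{i-1}, T_i commutes with L_{i-1} L_i, and the quadratic
   relation shows that it commutes with L_i + q L_{i-1}; hence it commutes with
   (q^{i-1} + L_{i-1}) (q^i + L_i).
   (b) L_i = T_{i->0} T_{1->i} and u_{i+1}^+ = u_i^+ (q^i + L_i).
   (c) Every T_x lies in the span of the T_{k->1} H', where H' is generated by T_2, ..., T_{d-1} and
   commutes with T_0. If k < i, then T_{k->1} commutes with u_i^+, and u_i^+ T_0 = u_i^+ because
   (1 + T_0) T_0 = 1 + T_0. If k >= i, then T_{k->1} = T_{k->i+1} T_{i->1}, the first factor commutes
   with u_i^+, and (b) applies to u_i^+ T_{i->0}. *)

(* tdown T k = T_{k->1}, tup T k = T_{1->k} and jm T k = T_{k->0->k}; unlike Tarr, these are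
   also correct for k = 0, where they give 1, 1 and T_0. *)
definition tdown :: "(nat \<Rightarrow> 'a::ring_1) \<Rightarrow> nat \<Rightarrow> 'a" where
  "tdown T k = prod_list (map T (rev [1..<Suc k]))"

definition tup :: "(nat \<Rightarrow> 'a::ring_1) \<Rightarrow> nat \<Rightarrow> 'a" where
  "tup T k = prod_list (map T [1..<Suc k])"

definition jm :: "(nat \<Rightarrow> 'a::ring_1) \<Rightarrow> nat \<Rightarrow> 'a" where
  "jm T k = tdown T k * T 0 * tup T k"

lemma tdown_0 [simp]: "tdown T 0 = 1"
  by (simp add: tdown_def)

lemma tdown_Suc [simp]: "tdown T (Suc k) = T (Suc k) * tdown T k"
  by (simp add: tdown_def)

lemma tup_0 [simp]: "tup T 0 = 1"
  by (simp add: tup_def)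

lemma tup_Suc [simp]: "tup T (Suc k) = tup T k * T (Suc k)"
  by (simp add: tup_def)

lemma jm_0 [simp]: "jm T 0 = T 0"
  by (simp add: jm_def)

lemma jm_Suc [simp]: "jm T (Suc k) = T (Suc k) * jm T k * T (Suc k)"
  by (simp add: jm_def mult.assoc)

lemma Tarr_down_zero: "Tarr T k 0 = tdown T k * T 0"
  by (simp add: Tarr_def tdown_def upt_conv_Cons del: upt_Suc)

lemma Tarr_one_up: "1 \<le> k \<Longrightarrow> Tarr T 1 k = tup T k"
  by (cases "k = 1") (auto simp add: Tarr_def tup_def)

lemma Tarr2_zero: "Tarr2 T k 0 = jm T k"
proof (cases k)
  case (Suc n)
  then have "Tarr T k 1 = tdown T k"
    by (simp add: Tarr_def tdown_def)
  moreover have "Tarr T 1 k = tup T k"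
    using Suc by (intro Tarr_one_up) simp
  ultimately show ?thesis
    by (simp add: Tarr2_def jm_def)
qed (simp add: Tarr2_def)

lemma uplus_eq_prod_list: "uplus sc q T k = prod_list (map (\<lambda>i. sc q ^ i + jm T i) [0..<k])"
  by (simp add: uplus_def Tarr2_zero)

lemma uplus_Suc: "uplus sc q T (Suc k) = uplus sc q T k * (sc q ^ k + jm T k)"
  by (simp add: uplus_eq_prod_list)

lemma commute_mult:
  fixes a :: "'a::semigroup_mult"
  assumes "a * x = x * a" and "a * y = y * a"
  shows "a * (x * y) = (x * y) * a"
  by (metis assms mult.assoc)

lemma commute_add:
  fixes a :: "'a::semiring"
  assumes "a * x = x * a" and "a * y = y * a"
  shows "a * (x + y) = (x + y) * a"
  by (simp add: assms distrib_left distrib_right)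

lemma commute_prod_list:
  fixes a :: "'a::monoid_mult"
  assumes "\<And>x. x \<in> set xs \<Longrightarrow> a * x = x * a"
  shows "a * prod_list xs = prod_list xs * a"
  using assms by (induction xs) (simp_all add: commute_mult)

lemma commute_sandwich:
  fixes a :: "'a::semigroup_mult"
  assumes "a * x = x * a" and "a * y = y * a"
  shows "a * (x * y * x) = (x * y * x) * a"
  by (metis assms mult.assoc)

lemma quadratic_sandwich_commute:
  fixes a A c :: "'a::ring_1"
  assumes quad: "a * a = (c - 1) * a + c" and ca: "c * a = a * c" and cA: "c * A = A * c"
  shows "a * (a * A * a + c * A) = (a * A * a + c * A) * a"
proof -
  have c1a: "(c - 1) * a = a * (c - 1)" and c1A: "(c - 1) * A = A * (c - 1)"
    using ca cA by (simp_all add: algebra_simps)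
  have aX: "a * (a * A * a) = (c - 1) * (a * A * a) + c * (A * a)"
    by (simp add: mult.assoc[symmetric] quad distrib_right)
  moreover have Xa: "(a * A * a) * a = (c - 1) * (a * A * a) + c * (a * A)"
  proof -
    have "(a * A * a) * a = a * A * (c - 1) * a + a * A * c"
      by (simp add: mult.assoc quad distrib_left)
    also have "\<dots> = (c - 1) * (a * A * a) + c * (a * A)"
      by (metis c1a c1A cA ca mult.assoc)
    finally show ?thesis .
  qed
  moreover have acA: "a * (c * A) = c * (a * A)" and cAa: "(c * A) * a = c * (A * a)"
    by (metis ca mult.assoc)+
  ultimately show ?thesis
    by (simp only: distrib_left distrib_right add.assoc add.commute[of "c * (A * a)"])
qed

lemma rinv_eqI:
  fixes x y :: "'a::ring_1"
  assumes "x * y = 1" and "y * x = 1"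
  shows "rinv x = y"
  unfolding rinv_def
proof (rule the_equality)
  fix z assume "x * z = 1 \<and> z * x = 1"
  then show "z = y"
    by (metis assms(1) mult.assoc mult_1_left mult_1_right)
qed (use assms in simp)

lemma twosided_mult_right:
  assumes "x \<in> twosided H u" and "g \<in> H" and "\<And>a b. a \<in> H \<Longrightarrow> b \<in> H \<Longrightarrow> a * b \<in> H"
  shows "x * g \<in> twosided H u"
  using assms(1)
proof induction
  case (prod h h')
  then show ?case
    using twosided.prod[of h H "h' * g" u] assms(2,3) by (simp add: mult.assoc)
qed (simp_all add: twosided.zero twosided.add distrib_right)

lemma twosided_mult_left:
  assumes "x \<in> twosided H u" and "g \<in> H" and "\<And>a b. a \<in> H \<Longrightarrow> b \<in> H \<Longrightarrow> a * b \<in> H"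
  shows "g * x \<in> twosided H u"
  using assms(1)
proof induction
  case (prod h h')
  then show ?case
    using twosided.prod[of "g * h" H h' u] assms(2,3) by (simp add: mult.assoc)
qed (simp_all add: twosided.zero twosided.add distrib_left)

locale hecke_B =
  fixes sc :: "'k::comm_ring_1 \<Rightarrow> 'a::ring_1" and q :: 'k and d :: nat and T :: "nat \<Rightarrow> 'a"
  assumes is_HB: "is_HB sc q d T"
begin

lemma sc_one: "sc 1 = 1"
  using is_HB unfolding is_HB_def by blast

lemma sc_add: "sc (a + b) = sc a + sc b"
  using is_HB unfolding is_HB_def by blast

lemma sc_mult: "sc (a * b) = sc a * sc b"
  using is_HB unfolding is_HB_def by blast

lemma sc_central: "sc a * x = x * sc a"
  using is_HB unfolding is_HB_def by blast

lemma q_unit: "q dvd 1"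
  using is_HB unfolding is_HB_def by blast

lemma T0_square: "T 0 * T 0 = 1"
  using is_HB unfolding is_HB_def by blast

lemma braid_01: "1 < d \<Longrightarrow> T 0 * T 1 * T 0 * T 1 = T 1 * T 0 * T 1 * T 0"
  using is_HB by (simp add: is_HB_def)

lemma T0_commute: "2 \<le> i \<Longrightarrow> i < d \<Longrightarrow> T 0 * T i = T i * T 0"
  using is_HB by (simp add: is_HB_def)

lemma braid: "1 \<le> i \<Longrightarrow> i + 1 < d \<Longrightarrow> T i * T (i + 1) * T i = T (i + 1) * T i * T (i + 1)"
  using is_HB by (simp add: is_HB_def)

lemma T_commute_far:
  assumes "1 \<le> i" and "i + 2 \<le> j" and "j < d"
  shows "T i * T j = T j * T i"
proof -
  have "\<forall>i j. 1 \<le> i \<and> 1 \<le> j \<and> i < d \<and> j < d \<and> (i + 2 \<le> j \<or> j + 2 \<le> i) \<longrightarrow> T i * T j = T j * T i"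
    using is_HB unfolding is_HB_def by blast
  with assms show ?thesis
    by simp
qed

lemma T_quadratic: "1 \<le> i \<Longrightarrow> i < d \<Longrightarrow> T i * T i = (sc q - 1) * T i + sc q"
  using is_HB by (simp add: is_HB_def)

lemma sc_zero: "sc 0 = 0"
  using sc_add[of 0 0] by simp

lemma sc_diff: "sc (a - b) = sc a - sc b"
  using sc_add[of "a - b" b] by (simp add: eq_diff_eq)

lemma sc_minus: "sc (- a) = - sc a"
  using sc_diff[of 0 a] by (simp add: sc_zero)

lemma sc_power: "sc a ^ n = sc (a ^ n)"
  by (induction n) (simp_all add: sc_one sc_mult)

lemma sc_power_central: "sc q ^ n * x = x * sc q ^ n"
  by (simp add: sc_power sc_central)

lemma commute_jm_factor:
  "a * jm T k = jm T k * a \<Longrightarrow> a * (sc q ^ k + jm T k) = (sc q ^ k + jm T k) * a"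
  by (simp add: distrib_left distrib_right sc_power_central)

lemma T0_jm_commute: "k < d \<Longrightarrow> T 0 * jm T k = jm T k * T 0"
proof (induction k)
  case (Suc k)
  show ?case
  proof (cases k)
    case 0
    with Suc.prems braid_01 show ?thesis
      by (simp add: mult.assoc)
  next
    case (Suc n)
    with Suc.prems have "T 0 * T (Suc k) = T (Suc k) * T 0"
      by (intro T0_commute) simp_all
    with Suc.prems Suc.IH show ?thesis
      by (simp only: jm_Suc commute_sandwich)
  qed
qed simp

lemma T_jm_commute_above: "k + 2 \<le> i \<Longrightarrow> i < d \<Longrightarrow> T i * jm T k = jm T k * T i"
proof (induction k)
  case 0
  then show ?case
    using T0_commute[of i] by simp
next
  case (Suc k)
  then have "T i * T (Suc k) = T (Suc k) * T i"
    using T_commute_far[of "Suc k" i] by simp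
  with Suc show ?case
    by (simp only: jm_Suc commute_sandwich)
qed

lemma T_jm_commute_below: "1 \<le> i \<Longrightarrow> i < k \<Longrightarrow> k < d \<Longrightarrow> T i * jm T k = jm T k * T i"
proof (induction k)
  case (Suc k)
  show ?case
  proof (cases "k = i")
    case True
    obtain p where p: "i = Suc p"
      using Suc.prems by (cases i) auto
    define a b L where "a = T i" and "b = T (Suc i)" and "L = jm T p"
    have bL: "b * L = L * b"
      unfolding b_def L_def using T_jm_commute_above[of p "Suc i"] Suc.prems True p by simp
    have aba: "a * b * a = b * a * b"
      unfolding a_def b_def using braid[of i] Suc.prems True by simp
    have "a * (b * (a * L * a) * b) = (a * b * a) * L * a * b"
      by (simp add: mult.assoc)
    also have "\<dots> = b * a * (b * L) * a * b"
      unfolding aba by (simp add: mult.assoc)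
    also have "\<dots> = b * a * L * (b * a * b)"
      unfolding bL by (simp add: mult.assoc)
    also have "\<dots> = (b * (a * L * a) * b) * a"
      unfolding aba[symmetric] by (simp add: mult.assoc)
    finally show ?thesis
      unfolding a_def b_def L_def using True p by simp
  next
    case False
    with Suc.prems have "T i * T (Suc k) = T (Suc k) * T i"
      using T_commute_far[of i "Suc k"] by simp
    with Suc False show ?thesis
      by (simp only: jm_Suc commute_sandwich)
  qed
qed simp

lemma jm_Suc_commute: "Suc n < d \<Longrightarrow> jm T n * jm T (Suc n) = jm T (Suc n) * jm T n"
proof (induction n)
  case 0
  then show ?case
    using braid_01 by (simp add: mult.assoc)
next
  case (Suc n)
  define A t1 t2 where "A = jm T n" and "t1 = T (Suc n)" and "t2 = T (Suc (Suc n))"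
  define B C where "B = t1 * A * t1" and "C = t2 * B * t2"
  have AB: "A * B = B * A"
    using Suc unfolding A_def B_def t1_def by simp
  have t1C: "t1 * C = C * t1"
    unfolding t1_def C_def B_def A_def t2_def
    using T_jm_commute_below[of "Suc n" "Suc (Suc n)"] Suc by simp
  have t2A: "t2 * A = A * t2"
    unfolding t2_def A_def using T_jm_commute_above[of n "Suc (Suc n)"] Suc by simp
  have AC: "A * C = C * A"
    unfolding C_def using commute_sandwich[OF t2A[symmetric] AB] .
  have "B * C = t1 * (A * C) * t1"
    by (simp add: B_def t1C mult.assoc)
  also have "\<dots> = C * B"
    by (simp add: AC B_def t1C mult.assoc[symmetric])
  finally show ?case
    unfolding C_def B_def t1_def t2_def A_def by simp
qed

lemma T_commute_jm_factor_pair: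
  assumes "Suc p < d"
  shows "T (Suc p) * ((sc q ^ p + jm T p) * (sc q ^ Suc p + jm T (Suc p)))
       = ((sc q ^ p + jm T p) * (sc q ^ Suc p + jm T (Suc p))) * T (Suc p)"
proof -
  define a A c where "a = T (Suc p)" and "A = jm T p" and "c = sc q"
  have c_central: "c ^ n * x = x * c ^ n" for n x
    unfolding c_def by (rule sc_power_central)
  have c_comm: "c * x = x * c" for x
    using c_central[of 1 x] by simp
  have quad: "a * a = (c - 1) * a + c"
    unfolding a_def c_def using T_quadratic[of "Suc p"] assms by simp
  have linear: "a * (c ^ p * (a * A * a + c * A)) = (c ^ p * (a * A * a + c * A)) * a"
    using commute_mult[OF c_central[symmetric] quadratic_sandwich_commute[OF quad c_comm c_comm]] .
  have scalar: "a * (c ^ p * c ^ Suc p) = (c ^ p * c ^ Suc p) * a"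
    unfolding power_add[symmetric] by (rule c_central[symmetric])
  have product: "a * (A * (a * A * a)) = (A * (a * A * a)) * a"
    using jm_Suc_commute[OF assms] unfolding a_def A_def by (simp add: mult.assoc)
  have "A * c ^ Suc p = c ^ p * (c * A)"
    by (metis c_central mult.assoc power_Suc2)
  then have expand: "(c ^ p + A) * (c ^ Suc p + a * A * a)
      = c ^ p * c ^ Suc p + c ^ p * (a * A * a + c * A) + A * (a * A * a)"
    by (simp only: distrib_left distrib_right add_ac)
  have "a * ((c ^ p + A) * (c ^ Suc p + a * A * a)) = ((c ^ p + A) * (c ^ Suc p + a * A * a)) * a"
    unfolding expand by (intro commute_add scalar linear product)
  then show ?thesis
    unfolding a_def A_def c_def by simp
qed

lemma uplus_commute_T:
  assumes "j \<le> d" and "i < d" and "i \<noteq> j"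
  shows "uplus sc q T j * T i = T i * uplus sc q T j"
proof -
  define F where "F = (\<lambda>k. sc q ^ k + jm T k)"
  have F_commute: "T i * F k = F k * T i" if "T i * jm T k = jm T k * T i" for k
    unfolding F_def using that by (rule commute_jm_factor)
  have "T i * prod_list (map F [0..<j]) = prod_list (map F [0..<j]) * T i"
  proof (cases "i = 0 \<or> j < i")
    case True
    have "T i * F k = F k * T i" if "k < j" for k
      using True that assms T0_jm_commute[of k] T_jm_commute_above[of k i] by (auto intro!: F_commute)
    then show ?thesis
      by (intro commute_prod_list) auto
  next
    case False
    then obtain p where p: "i = Suc p" and "Suc p < j"
      using assms(3) by (cases i) auto
    have "[p..<j] = [p, Suc p] @ [Suc (Suc p)..<j]"
      using \<open>Suc p < j\<close> by (simp add: upt_conv_Cons)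
    moreover have "[0..<j] = [0..<p] @ [p..<j]"
      using upt_add_eq_append[of 0 p "j - p"] \<open>Suc p < j\<close> by simp
    ultimately have split: "[0..<j] = [0..<p] @ [p, Suc p] @ [Suc (Suc p)..<j]"
      by simp
    have "T i * F k = F k * T i" if "k < p" for k
      by (intro F_commute T_jm_commute_above) (use that assms p in auto)
    then have low: "T i * prod_list (map F [0..<p]) = prod_list (map F [0..<p]) * T i"
      by (intro commute_prod_list) auto
    have pair: "T i * (F p * F (Suc p)) = (F p * F (Suc p)) * T i"
      unfolding F_def p by (rule T_commute_jm_factor_pair) (use assms p in simp)
    have "T i * F k = F k * T i" if "Suc (Suc p) \<le> k" "k < j" for k
      by (intro F_commute T_jm_commute_below) (use that assms p in auto)
    then have high: "T i * prod_list (map F [Suc (Suc p)..<j]) = prod_list (map F [Suc (Suc p)..<j]) * T i"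
      by (intro commute_prod_list) auto
    show ?thesis
      unfolding split
      by (simp only: map_append list.map prod_list.append prod_list.Cons prod_list.Nil mult_1_right)
        (rule commute_mult[OF low commute_mult[OF pair high]])
  qed
  then show ?thesis
    by (simp add: uplus_eq_prod_list F_def)
qed

lemma one_in_Hset: "1 \<in> Hset sc S n"
  using Hset.scal[of sc 1 S n] by (simp add: sc_one)

lemma prod_list_in_Hset: "(\<And>x. x \<in> set xs \<Longrightarrow> x \<in> Hset sc T d) \<Longrightarrow> prod_list xs \<in> Hset sc T d"
  by (induction xs) (simp_all add: one_in_Hset Hset.mult)

lemma T_invertible:
  assumes "1 \<le> k" and "k < d"
  shows "\<exists>y \<in> Hset sc T d. T k * y = 1 \<and> y * T k = 1"
proof -
  obtain q' where q': "q * q' = 1"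
    using q_unit by (metis dvd_def)
  define y where "y = sc q' * (T k + sc (1 - q))"
  have "T k * (T k + sc (1 - q)) = sc q" and "(T k + sc (1 - q)) * T k = sc q"
    using T_quadratic[OF assms] sc_central[of "1 - q" "T k"]
    by (simp_all add: sc_diff sc_one distrib_left distrib_right algebra_simps)
  moreover have "sc q' * sc q = 1"
    using q' by (metis mult.commute sc_mult sc_one)
  ultimately have "T k * y = 1" and "y * T k = 1"
    unfolding y_def by (metis mult.assoc sc_central)+
  moreover have "y \<in> Hset sc T d"
    unfolding y_def using assms by (intro Hset.mult Hset.add Hset.scal Hset.gen)
  ultimately show ?thesis
    by blast
qed

lemma tup_invertible: "i < d \<Longrightarrow> \<exists>y \<in> Hset sc T d. tup T i * y = 1 \<and> y * tup T i = 1"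
proof (induction i)
  case 0
  then show ?case
    using one_in_Hset by auto
next
  case (Suc i)
  then obtain y y' where y: "y \<in> Hset sc T d" "tup T i * y = 1" "y * tup T i = 1"
    and y': "y' \<in> Hset sc T d" "T (Suc i) * y' = 1" "y' * T (Suc i) = 1"
    using T_invertible[of "Suc i"] by auto
  have "tup T (Suc i) * (y' * y) = 1" and "(y' * y) * tup T (Suc i) = 1"
    using y y' by (simp_all add: mult.assoc) (metis mult.assoc mult_1_left)+
  with y y' show ?case
    by (blast intro: Hset.mult)
qed

lemma rinv_tup: "i < d \<Longrightarrow> rinv (tup T i) \<in> Hset sc T d \<and> tup T i * rinv (tup T i) = 1"
  using tup_invertible rinv_eqI by metis

lemma rinv_Tarr_one_in_Hset: "1 \<le> i \<Longrightarrow> i < d \<Longrightarrow> rinv (Tarr T 1 i) \<in> Hset sc T d"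
  unfolding Tarr_one_up using rinv_tup by blast

lemma uplus_mult_Tarr_down_zero:
  assumes "1 \<le> i" and "i < d"
  shows "uplus sc q T i * Tarr T i 0
    = uplus sc q T (i + 1) * rinv (Tarr T 1 i) - sc q ^ i * uplus sc q T i * rinv (Tarr T 1 i)"
proof -
  define u R where "u = uplus sc q T i" and "R = rinv (tup T i)"
  have "uplus sc q T (i + 1) * R - sc q ^ i * u * R = u * jm T i * R"
    by (simp add: u_def uplus_Suc distrib_left distrib_right sc_power_central)
  also have "\<dots> = u * Tarr T i 0 * (tup T i * R)"
    by (simp add: jm_def Tarr_down_zero mult.assoc)
  also have "\<dots> = u * Tarr T i 0"
    using rinv_tup[OF assms(2)] by (simp add: R_def)
  finally show ?thesis
    unfolding Tarr_one_up[OF assms(1)] u_def R_def by simp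
qed

(* The subalgebra generated by T_2, ..., T_{d-1}. *)
abbreviation parabolic :: "'a set" where
  "parabolic \<equiv> Hset sc (\<lambda>n. T (Suc n)) (d - 1)"

lemma parabolic_subset_Hset: "x \<in> parabolic \<Longrightarrow> x \<in> Hset sc T d"
  by (induction rule: Hset.induct) (auto intro: Hset.intros)

lemma T_in_parabolic: "2 \<le> j \<Longrightarrow> j < d \<Longrightarrow> T j \<in> parabolic"
  using Hset.gen[where i = "j - 1" and d = "d - 1" and sc = sc and T = "\<lambda>n. T (Suc n)"] by simp

lemma T0_commute_parabolic: "x \<in> parabolic \<Longrightarrow> T 0 * x = x * T 0"
proof (induction rule: Hset.induct)
  case (scal a)
  then show ?case
    by (rule sc_central[symmetric])
next
  case (gen i)
  then show ?case
    by (intro T0_commute) simp_all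
next
  case (add x y)
  from add.IH show ?case
    by (rule commute_add)
next
  case (mult x y)
  from mult.IH show ?case
    by (rule commute_mult)
qed

lemma tdown_in_Hset: "k < d \<Longrightarrow> tdown T k \<in> Hset sc T d"
  by (induction k) (simp_all add: one_in_Hset Hset.mult Hset.gen)

lemma T_tdown_commute_far: "k + 2 \<le> j \<Longrightarrow> j < d \<Longrightarrow> T j * tdown T k = tdown T k * T j"
  unfolding tdown_def by (intro commute_prod_list) (auto intro!: T_commute_far[symmetric])

lemma T_tdown_braid: "1 \<le> j \<Longrightarrow> j < k \<Longrightarrow> k < d \<Longrightarrow> T j * tdown T k = tdown T k * T (Suc j)"
proof (induction k)
  case (Suc k)
  show ?case
  proof (cases "k = j")
    case True
    obtain p where p: "j = Suc p"
      using Suc.prems by (cases j) auto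
    have aba: "T j * T (Suc j) * T j = T (Suc j) * T j * T (Suc j)"
      using braid[of j] Suc.prems True by simp
    have far: "T (Suc j) * tdown T p = tdown T p * T (Suc j)"
      using T_tdown_commute_far[of p "Suc j"] Suc.prems True p by simp
    have "T j * tdown T (Suc k) = (T j * T (Suc j) * T j) * tdown T p"
      using True p by (simp add: mult.assoc)
    also have "\<dots> = T (Suc j) * T j * (T (Suc j) * tdown T p)"
      unfolding aba by (simp add: mult.assoc)
    also have "\<dots> = tdown T (Suc k) * T (Suc j)"
      unfolding far using True p by (simp add: mult.assoc)
    finally show ?thesis .
  next
    case False
    with Suc.prems have comm: "T j * T (Suc k) = T (Suc k) * T j"
      by (intro T_commute_far) simp_all
    from Suc False have IH: "T j * tdown T k = tdown T k * T (Suc j)"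
      by simp
    have "T j * tdown T (Suc k) = (T j * T (Suc k)) * tdown T k"
      by (simp add: mult.assoc)
    also have "\<dots> = T (Suc k) * (T j * tdown T k)"
      unfolding comm by (simp add: mult.assoc)
    also have "\<dots> = tdown T (Suc k) * T (Suc j)"
      unfolding IH by (simp add: mult.assoc)
    finally show ?thesis .
  qed
qed simp

lemma T_tdown_quadratic:
  assumes "1 \<le> k" and "k < d"
  shows "T k * tdown T k = tdown T k * sc (q - 1) + tdown T (k - 1) * sc q"
proof -
  obtain p where p: "k = Suc p"
    using assms by (cases k) auto
  have "T k * tdown T k = (T k * T k) * tdown T p"
    using p by (simp add: mult.assoc)
  also have "\<dots> = sc (q - 1) * tdown T k + sc q * tdown T p"
    using T_quadratic[OF assms] p by (simp add: sc_diff sc_one distrib_right mult.assoc)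
  finally show ?thesis
    using p by (simp add: sc_central)
qed

inductive_set coset_span :: "'a set" where
  zero: "0 \<in> coset_span"
| tdown: "k < d \<Longrightarrow> x \<in> parabolic \<Longrightarrow> tdown T k * x \<in> coset_span"
| add: "x \<in> coset_span \<Longrightarrow> y \<in> coset_span \<Longrightarrow> x + y \<in> coset_span"

lemma T_mult_coset_span:
  assumes "v \<in> coset_span" and "1 \<le> j" and "j < d"
  shows "T j * v \<in> coset_span"
  using assms(1)
proof induction
  case zero
  then show ?case
    by (simp add: coset_span.zero)
next
  case (add x y)
  then show ?case
    by (simp add: distrib_left coset_span.add)
next
  case (tdown k x)
  consider "j = Suc k" | "Suc k < j" | "j = k" | "j < k"
    by linarith
  then show ?case
  proof cases
    case 1
    then show ?thesis
      using coset_span.tdown[of "Suc k" x] tdown assms by (simp add: mult.assoc)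
  next
    case 2
    then have "T j * (tdown T k * x) = tdown T k * (T j * x)"
      using T_tdown_commute_far[of k j] assms by (simp add: mult.assoc[symmetric])
    moreover have "T j * x \<in> parabolic"
      using 2 assms tdown by (intro Hset.mult T_in_parabolic) simp_all
    ultimately show ?thesis
      using coset_span.tdown tdown by simp
  next
    case 3
    then have "T j * (tdown T k * x) = tdown T k * (sc (q - 1) * x) + tdown T (k - 1) * (sc q * x)"
      using T_tdown_quadratic[of k] assms by (simp add: mult.assoc[symmetric] distrib_right)
    moreover have "sc (q - 1) * x \<in> parabolic" and "sc q * x \<in> parabolic"
      using tdown by (simp_all add: Hset.mult Hset.scal)
    ultimately show ?thesis
      using tdown by (simp add: coset_span.add coset_span.tdown)
  next
    case 4
    then have "T j * (tdown T k * x) = tdown T k * (T (Suc j) * x)"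
      using T_tdown_braid[of j k] assms tdown by (simp add: mult.assoc[symmetric])
    moreover have "T (Suc j) * x \<in> parabolic"
      using 4 assms tdown by (intro Hset.mult T_in_parabolic) simp_all
    ultimately show ?thesis
      using coset_span.tdown tdown by simp
  qed
qed

lemma Tword_in_coset_span:
  assumes "0 < d" and "set w \<subseteq> {1..<d}"
  shows "Tword T w \<in> coset_span"
  using assms(2)
proof (induction w)
  case Nil
  show ?case
    using coset_span.tdown[OF assms(1) one_in_Hset] by (simp add: Tword_def)
next
  case (Cons a w)
  then show ?case
    using T_mult_coset_span by (simp add: Tword_def)
qed

definition uplus_span :: "nat \<Rightarrow> 'a set" where
  "uplus_span i = {uplus sc q T i * h + (\<Sum>j\<in>{i<..d}. f j) | h f.
     h \<in> Hset sc T d \<and> (\<forall>j\<in>{i<..d}. f j \<in> twosided (Hset sc T d) (uplus sc q T j))}"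

lemma uplus_mult_in_uplus_span: "h \<in> Hset sc T d \<Longrightarrow> uplus sc q T i * h \<in> uplus_span i"
  unfolding uplus_span_def
  by (rule CollectI, intro exI[of _ h] exI[of _ "\<lambda>_. 0"]) (simp add: twosided.zero)

lemma zero_in_uplus_span: "0 \<in> uplus_span i"
  using uplus_mult_in_uplus_span[OF Hset.scal[of sc 0]] by (simp add: sc_zero)

lemma add_in_uplus_span:
  assumes "x \<in> uplus_span i" and "y \<in> uplus_span i"
  shows "x + y \<in> uplus_span i"
proof -
  obtain h f h' f' where x: "x = uplus sc q T i * h + (\<Sum>j\<in>{i<..d}. f j)" and "h \<in> Hset sc T d"
    and "\<forall>j\<in>{i<..d}. f j \<in> twosided (Hset sc T d) (uplus sc q T j)"
    and y: "y = uplus sc q T i * h' + (\<Sum>j\<in>{i<..d}. f' j)" and "h' \<in> Hset sc T d"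
    and "\<forall>j\<in>{i<..d}. f' j \<in> twosided (Hset sc T d) (uplus sc q T j)"
    using assms unfolding uplus_span_def by blast
  moreover have "x + y = uplus sc q T i * (h + h') + (\<Sum>j\<in>{i<..d}. f j + f' j)"
    unfolding x y by (simp add: sum.distrib distrib_left add_ac)
  ultimately show ?thesis
    unfolding uplus_span_def by (blast intro: Hset.add twosided.add)
qed

lemma mult_right_in_uplus_span:
  assumes "x \<in> uplus_span i" and "g \<in> Hset sc T d"
  shows "x * g \<in> uplus_span i"
proof -
  obtain h f where x: "x = uplus sc q T i * h + (\<Sum>j\<in>{i<..d}. f j)" and "h \<in> Hset sc T d"
    and "\<forall>j\<in>{i<..d}. f j \<in> twosided (Hset sc T d) (uplus sc q T j)"
    using assms unfolding uplus_span_def by blast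
  moreover have "x * g = uplus sc q T i * (h * g) + (\<Sum>j\<in>{i<..d}. f j * g)"
    unfolding x by (simp add: sum_distrib_right distrib_right mult.assoc)
  ultimately show ?thesis
    unfolding uplus_span_def using assms(2)
    by (blast intro: Hset.mult twosided_mult_right)
qed

lemma mult_left_in_uplus_span:
  assumes "x \<in> uplus_span i" and "g \<in> Hset sc T d" and "g * uplus sc q T i = uplus sc q T i * g"
  shows "g * x \<in> uplus_span i"
proof -
  obtain h f where x: "x = uplus sc q T i * h + (\<Sum>j\<in>{i<..d}. f j)" and "h \<in> Hset sc T d"
    and "\<forall>j\<in>{i<..d}. f j \<in> twosided (Hset sc T d) (uplus sc q T j)"
    using assms unfolding uplus_span_def by blast
  moreover have "g * x = uplus sc q T i * (g * h) + (\<Sum>j\<in>{i<..d}. g * f j)"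
    unfolding x by (simp add: sum_distrib_left distrib_left assms(3) mult.assoc[symmetric])
  ultimately show ?thesis
    unfolding uplus_span_def using assms(2)
    by (blast intro: Hset.mult twosided_mult_left)
qed

lemma uplus_mult_T0:
  assumes "1 \<le> i" and "i \<le> d"
  shows "uplus sc q T i * T 0 = uplus sc q T i"
proof -
  define R where "R = prod_list (map (\<lambda>k. sc q ^ k + jm T k) [1..<i])"
  have u: "uplus sc q T i = (1 + T 0) * R"
    using assms by (simp add: uplus_eq_prod_list R_def upt_conv_Cons del: upt_Suc)
  have "uplus sc q T i * T 0 = T 0 * uplus sc q T i"
    using uplus_commute_T[OF assms(2), of 0] assms by simp
  also have "\<dots> = (T 0 + T 0 * T 0) * R"
    by (simp add: u distrib_left mult.assoc[symmetric])
  also have "\<dots> = uplus sc q T i"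
    by (simp add: u T0_square add.commute)
  finally show ?thesis .
qed

lemma uplus_commute_tdown:
  assumes "k < i" and "i \<le> d"
  shows "uplus sc q T i * tdown T k = tdown T k * uplus sc q T i"
  unfolding tdown_def using assms
  by (intro commute_prod_list) (auto intro!: uplus_commute_T)

lemma tdown_split: "i \<le> k \<Longrightarrow> tdown T k = prod_list (map T (rev [Suc i..<Suc k])) * tdown T i"
  unfolding tdown_def using upt_add_eq_append[of 1 "Suc i" "k - i"] by simp

lemma uplus_mult_Tarr_down_zero_decomp:
  assumes "1 \<le> i" and "i < d"
  shows "\<exists>f. (\<forall>j \<in> {i<..d}. f j \<in> twosided (Hset sc T d) (uplus sc q T j)) \<and>
    uplus sc q T i * Tarr T i 0
      = uplus sc q T i * (- (sc q ^ i) * rinv (Tarr T 1 i)) + (\<Sum>j \<in> {i<..d}. f j)"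
proof -
  define R where "R = rinv (Tarr T 1 i)"
  define f where "f j = (if j = Suc i then uplus sc q T j * R else 0)" for j
  have "R \<in> Hset sc T d"
    unfolding R_def using assms by (rule rinv_Tarr_one_in_Hset)
  then have "\<forall>j \<in> {i<..d}. f j \<in> twosided (Hset sc T d) (uplus sc q T j)"
    using twosided.prod[OF one_in_Hset] by (simp add: f_def twosided.zero)
  moreover have "(\<Sum>j \<in> {i<..d}. f j) = uplus sc q T (i + 1) * R"
    using assms by (simp add: f_def sum.delta')
  moreover have "uplus sc q T i * (- (sc q ^ i) * R) = - (sc q ^ i * uplus sc q T i * R)"
    by (simp add: sc_power_central mult.assoc)
  ultimately show ?thesis
    using uplus_mult_Tarr_down_zero[OF assms] by (auto simp: R_def)
qed

lemma uplus_mult_Tarr_down_zero_in_uplus_span: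
  assumes "1 \<le> i" and "i < d"
  shows "uplus sc q T i * Tarr T i 0 \<in> uplus_span i"
proof -
  have "- (sc q ^ i) = sc (- (q ^ i))"
    by (simp add: sc_power sc_minus)
  then have "- (sc q ^ i) * rinv (Tarr T 1 i) \<in> Hset sc T d"
    using rinv_Tarr_one_in_Hset[OF assms] by (simp add: Hset.mult Hset.scal)
  then show ?thesis
    using uplus_mult_Tarr_down_zero_decomp[OF assms] unfolding uplus_span_def by blast
qed

lemma uplus_tdown_T0_in_uplus_span:
  assumes "1 \<le> i" and "i \<le> d" and "k < d"
  shows "uplus sc q T i * tdown T k * T 0 \<in> uplus_span i"
proof (cases "k < i")
  case True
  then have "uplus sc q T i * tdown T k * T 0 = tdown T k * (uplus sc q T i * T 0)"
    using uplus_commute_tdown assms by (simp add: mult.assoc)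
  also have "\<dots> = uplus sc q T i * tdown T k"
    using uplus_mult_T0 uplus_commute_tdown True assms by simp
  finally show ?thesis
    using uplus_mult_in_uplus_span tdown_in_Hset assms by simp
next
  case False
  define P where "P = prod_list (map T (rev [Suc i..<Suc k]))"
  have P_in_Hset: "P \<in> Hset sc T d"
    unfolding P_def using assms by (intro prod_list_in_Hset) (auto intro: Hset.gen)
  have P_commute: "P * uplus sc q T i = uplus sc q T i * P"
    unfolding P_def using assms
    by (intro commute_prod_list[symmetric]) (auto intro!: uplus_commute_T)
  have "uplus sc q T i * tdown T k * T 0 = uplus sc q T i * P * (tdown T i * T 0)"
    using tdown_split[of i k] False by (simp add: P_def mult.assoc)
  also have "\<dots> = P * (uplus sc q T i * Tarr T i 0)"
    unfolding P_commute[symmetric] Tarr_down_zero by (simp add: mult.assoc)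
  finally show ?thesis
    using mult_left_in_uplus_span[OF uplus_mult_Tarr_down_zero_in_uplus_span P_in_Hset P_commute]
      False assms by simp
qed

lemma uplus_coset_span_T0_in_uplus_span:
  assumes "v \<in> coset_span" and "1 \<le> i" and "i \<le> d"
  shows "uplus sc q T i * v * T 0 \<in> uplus_span i"
  using assms(1)
proof induction
  case zero
  then show ?case
    by (simp add: zero_in_uplus_span)
next
  case (add x y)
  then show ?case
    by (simp add: distrib_left distrib_right add_in_uplus_span)
next
  case (tdown k x)
  then have "uplus sc q T i * (tdown T k * x) * T 0 = (uplus sc q T i * tdown T k * T 0) * x"
    using T0_commute_parabolic by (simp add: mult.assoc)
  with tdown assms show ?case
    by (simp add: mult_right_in_uplus_span uplus_tdown_T0_in_uplus_span parabolic_subset_Hset)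
qed

lemma uplus_Tword_T0_decomp:
  assumes "1 \<le> i" and "i \<le> d" and "set w \<subseteq> {1..<d}"
  shows "\<exists>h \<in> Hset sc T d. \<exists>f. (\<forall>j \<in> {i<..d}. f j \<in> twosided (Hset sc T d) (uplus sc q T j)) \<and>
    uplus sc q T i * Tword T w * T 0 = uplus sc q T i * h + (\<Sum>j \<in> {i<..d}. f j)"
proof -
  have "Tword T w \<in> coset_span"
    using assms by (intro Tword_in_coset_span) simp_all
  then show ?thesis
    using uplus_coset_span_T0_in_uplus_span assms unfolding uplus_span_def by blast
qed

end

theorem lemma6p2:
  fixes sc :: "'k::comm_ring_1 \<Rightarrow> 'a::ring_1" and q :: 'k and T :: "nat \<Rightarrow> 'a"
    and m d :: nat
  assumes m: "1 \<le> m" and d: "d = 2 * m"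
    and HB: "is_HB sc q d T"
  defines "u \<equiv> uplus sc q T"
    and "H \<equiv> Hset sc T d"
  shows
    "(\<forall>j \<le> d. \<forall>i < d. i \<noteq> j \<longrightarrow> u j * T i = T i * u j)
   \<and> (\<forall>i. 1 \<le> i \<and> i < d \<longrightarrow>
        u i * Tarr T i 0 = u (i+1) * rinv (Tarr T 1 i) - sc q ^ i * u i * rinv (Tarr T 1 i))
   \<and> (\<forall>i w. 1 \<le> i \<and> i \<le> d \<and> reduced_word d w \<longrightarrow>
        (\<exists>h \<in> H. \<exists>f. (\<forall>j \<in> {i<..d}. f j \<in> twosided H (u j)) \<and>
           u i * Tword T w * T 0 = u i * h + (\<Sum>j \<in> {i<..d}. f j)))
   \<and> (\<forall>i. 1 \<le> i \<and> i < d \<longrightarrow>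
        (\<exists>f. (\<forall>j \<in> {i<..d}. f j \<in> twosided H (u j)) \<and>
           u i * Tarr T i 0 = u i * (- (sc q ^ i) * rinv (Tarr T 1 i)) + (\<Sum>j \<in> {i<..d}. f j)))"
proof -
  interpret hecke_B sc q d T
    using HB by (rule hecke_B.intro)
  have "set w \<subseteq> {1..<d}" if "reduced_word d w" for w
    using that by (simp add: reduced_word_def)
  then show ?thesis
    unfolding u_def H_def
    using uplus_commute_T uplus_mult_Tarr_down_zero uplus_Tword_T0_decomp
      uplus_mult_Tarr_down_zero_decomp
    by blast
qed

end
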